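(* The homotopy $H:\mathcal{T}^c(M)\to\mathcal{T}^c(M)$ maps the sub-$\mathbb{S}$-module $\mathcal{G}^{¡}\subset\mathcal{T}^c(M)$ into itself.
   Context: $M$ is spanned by arity-2 elements $\mu$ (degree 1) and $\beta$ (degree 2), trivial $\mathbb{S}_2$-action. The Gerstenhaber operad is $\mathcal{G}=\mathcal{T}(s^{-1}M)/(R)$ with $s^{-1}\mu=\bullet$ (commutative associative product) and $s^{-1}\beta=\langle\,,\rangle$ (degree-1 Lie bracket), with Leibniz compatibility. Its Koszul dual cooperad $\mathcal{G}^{¡}$ is the intersection of $\mathcal{T}^c(M)\subset\mathcal{T}^c(s\overline{\mathcal{G}})$ with the kernel of the coderivation $d_2$ of the bar construction induced by infinitesimal composition in $\mathcal G$. $H$ is defined as follows: for a binary tree and vertex $v$, $\omega(v)=m_vn_v$ where $m_v,n_v$ are the numbers of leaves above the two inputs of $v$; $h:M\to M$ sends $\beta\mapsto\mu,\mu\mapsto0$; $H$ sends a decorated tree with $n$ vertices to $\sum_v\frac{\omega(v)}{\binom{n+1}{2}}$ times the tree with $h$ applied at $v$ (Koszul sign, vertices ordered via the planar representation). *)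

theory Defs
  imports Main
begin

text \<open>Decorations: Mu = mu (degree 1), Be = beta (degree 2), trivial S2-action.\<close>
datatype dec = Mu | Be

datatype tree = Lf nat | Nd dec tree tree

fun dg :: "dec \<Rightarrow> nat" where
  "dg Mu = 1" | "dg Be = 2"

fun tdeg :: "tree \<Rightarrow> nat" where
  "tdeg (Lf i) = 0"
| "tdeg (Nd d l r) = dg d + tdeg l + tdeg r"

fun leaves :: "tree \<Rightarrow> nat list" where
  "leaves (Lf i) = [i]"
| "leaves (Nd d l r) = leaves l @ leaves r"

fun nverts :: "tree \<Rightarrow> nat" where
  "nverts (Lf i) = 0"
| "nverts (Nd d l r) = Suc (nverts l + nverts r)"

definition arity_tree :: "nat \<Rightarrow> tree \<Rightarrow> bool" where
  "arity_tree n t \<longleftrightarrow> distinct (leaves t) \<and> set (leaves t) = {1..n}"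

datatype ctx = Hole | CL dec ctx tree | CR dec tree ctx

fun plug :: "ctx \<Rightarrow> tree \<Rightarrow> tree" where
  "plug Hole s = s"
| "plug (CL d C r) s = Nd d (plug C s) r"
| "plug (CR d l C) s = Nd d l (plug C s)"

text \<open>Total degree of the vertices preceding the hole in the planar (preorder) ordering.\<close>
fun pre_deg :: "ctx \<Rightarrow> nat" where
  "pre_deg Hole = 0"
| "pre_deg (CL d C r) = dg d + pre_deg C"
| "pre_deg (CR d l C) = dg d + tdeg l + pre_deg C"

fun decomps :: "tree \<Rightarrow> (ctx \<times> dec \<times> tree \<times> tree) list" where
  "decomps (Lf i) = []"
| "decomps (Nd d l r) = (Hole, d, l, r)
     # map (\<lambda>(C, e, a, b). (CL d C r, e, a, b)) (decomps l)
     @ map (\<lambda>(C, e, a, b). (CR d l C, e, a, b)) (decomps r)"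

text \<open>An element of T^c(M)(n) is given by its coefficients on planar representatives;
  the planar monomial of a tree is the tensor of its vertex decorations in preorder,
  so swapping the two subtrees at a vertex costs the Koszul sign (-1)^(|l||r|).\<close>
definition TcM :: "nat \<Rightarrow> (tree \<Rightarrow> 'a::field_char_0) set" where
  "TcM n = {c. (\<forall>t. \<not> arity_tree n t \<longrightarrow> c t = 0) \<and>
      (\<forall>C d l r. c (plug C (Nd d r l)) = (-1) ^ (tdeg l * tdeg r) * c (plug C (Nd d l r)))}"

text \<open>H(t) = sum over vertices v of omega(v)/binom(#vertices+1,2) times t with h applied at v,
  with h(beta) = mu, h(mu) = 0 and Koszul sign (-1)^(degrees of vertices before v).
  Written as the coefficient of a planar tree t in H(c).\<close>
definition Hop :: "(tree \<Rightarrow> 'a::field_char_0) \<Rightarrow> tree \<Rightarrow> 'a" where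
  "Hop c t = sum_list (map (\<lambda>(C, d, l, r).
      if d = Mu then
        of_nat (length (leaves l) * length (leaves r)) / of_nat (Suc (nverts t) choose 2)
        * (-1) ^ pre_deg C * c (plug C (Nd Be l r))
      else 0) (decomps t))"

text \<open>T(s^{-1}M)(3) has basis e(k,u,w) = the tree u(w(i,j),k) with {i,j,k}={1,2,3}, i<j,
  decorations u (root) and w (upper vertex); vectors are functions nat => dec => dec => 'a
  supported on k in {1,2,3}.\<close>
definition e3 :: "nat \<Rightarrow> dec \<Rightarrow> dec \<Rightarrow> nat \<Rightarrow> dec \<Rightarrow> dec \<Rightarrow> 'a::field_char_0" where
  "e3 k u w = (\<lambda>k' u' w'. if k' = k \<and> u' = u \<and> w' = w then 1 else 0)"

text \<open>R(3): associativity of the product (2 relations), Jacobi for the degree-1 bracket,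
  and the three Leibniz relations  <x_i . x_j, x_k> = x_i . <x_j,x_k> + <x_i,x_k> . x_j.\<close>
definition R3 :: "(nat \<Rightarrow> dec \<Rightarrow> dec \<Rightarrow> 'a::field_char_0) set" where
  "R3 = {v. \<exists>a1 a2 j l1 l2 l3.
     v = (\<lambda>k u w.
        a1 * e3 3 Mu Mu k u w - a1 * e3 1 Mu Mu k u w
      + a2 * e3 1 Mu Mu k u w - a2 * e3 2 Mu Mu k u w
      + j * (e3 1 Be Be k u w + e3 2 Be Be k u w + e3 3 Be Be k u w)
      + l1 * (e3 1 Be Mu k u w - e3 2 Mu Be k u w - e3 3 Mu Be k u w)
      + l2 * (e3 2 Be Mu k u w - e3 1 Mu Be k u w - e3 3 Mu Be k u w)
      + l3 * (e3 3 Be Mu k u w - e3 1 Mu Be k u w - e3 2 Mu Be k u w))}"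

text \<open>Sign of s u' (x) s w' |-> s(u' o w'): (-1)^|u'| with |u'| = dg u - 1.\<close>
definition susp_sign :: "dec \<Rightarrow> 'a::field_char_0" where
  "susp_sign u = (-1) ^ (dg u + 1)"

text \<open>The component of d_2(c) at the target tree obtained by plugging into context C a ternary
  vertex with (planar) inputs A, B, D; it is a vector of T(s^{-1}M)(3), and d_2(c) has zero
  component there iff this vector lies in R(3).  The three summands come from contracting
  the internal edge of u(w(A,B),D), u(A,w(B,D)), u(w(A,D),B), with Koszul signs.\<close>
definition d2_local :: "(tree \<Rightarrow> 'a::field_char_0) \<Rightarrow> ctx \<Rightarrow> tree \<Rightarrow> tree \<Rightarrow> tree
    \<Rightarrow> nat \<Rightarrow> dec \<Rightarrow> dec \<Rightarrow> 'a" where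
  "d2_local c C A B D k u w =
     (if k = 3 then susp_sign u * c (plug C (Nd u (Nd w A B) D))
      else if k = 1 then susp_sign u * (-1) ^ (dg w * tdeg A) * c (plug C (Nd u A (Nd w B D)))
      else if k = 2 then susp_sign u * (-1) ^ (tdeg B * tdeg D) * c (plug C (Nd u (Nd w A D) B))
      else 0)"

definition Gdual :: "nat \<Rightarrow> (tree \<Rightarrow> 'a::field_char_0) set" where
  "Gdual n = {c \<in> TcM n. \<forall>C A B D. d2_local c C A B D \<in> R3}"

end

theory Submission
  imports Defs
begin

(* H is Hsum / binom(#vertices+1, 2), where Hsum is the unnormalised sum over vertices; the
   normalising factor only depends on the number of vertices, which is the same for all trees
   touched by one coefficient of H or of d_2, so it suffices to study Hsum.
   (1) R(3) is a linear subspace, stable under the twist (-1)^(|u|+|w|), and stable under the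
       map "apply h at one of the two vertices of a ternary patch" with the weights omega
       (lemma patch_h_R3): this is the only place where the Gerstenhaber relations are used.
   (2) Hsum satisfies a recursion over the root (Hsum_Nd) and over one-hole contexts
       (Hsum_plug): Hsum of C[s] splits into the vertices of C (Hctx) and those of s.
   (3) Membership in T^c(M): Hsum keeps the leaf set and is compatible with the Koszul swap.
   (4) Kernel of d_2: the d_2-component at a ternary patch in context C is a sum of the
       vertices outside the patch (handled by linearity, Hctx_d2_R3), the subtrees A, B, D
       below it (linearity again), and the two patch vertices themselves (patch_h_R3). *)

section \<open>The relation space R(3) is closed under the relevant linear operations\<close>

definition r3_vec :: "'a \<Rightarrow> 'a \<Rightarrow> 'a \<Rightarrow> 'a \<Rightarrow> 'a \<Rightarrow> 'a \<Rightarrow> nat \<Rightarrow> dec \<Rightarrow> dec \<Rightarrow> 'a::field_char_0" where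
  "r3_vec a1 a2 j l1 l2 l3 = (\<lambda>k u w.
        a1 * e3 3 Mu Mu k u w - a1 * e3 1 Mu Mu k u w
      + a2 * e3 1 Mu Mu k u w - a2 * e3 2 Mu Mu k u w
      + j * (e3 1 Be Be k u w + e3 2 Be Be k u w + e3 3 Be Be k u w)
      + l1 * (e3 1 Be Mu k u w - e3 2 Mu Be k u w - e3 3 Mu Be k u w)
      + l2 * (e3 2 Be Mu k u w - e3 1 Mu Be k u w - e3 3 Mu Be k u w)
      + l3 * (e3 3 Be Mu k u w - e3 1 Mu Be k u w - e3 2 Mu Be k u w))"

lemma R3_iff: "v \<in> R3 \<longleftrightarrow> (\<exists>a1 a2 j l1 l2 l3. v = r3_vec a1 a2 j l1 l2 l3)"
  unfolding R3_def r3_vec_def by simp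

lemma R3_zero: "(\<lambda>k u w. 0) \<in> R3"
  unfolding R3_iff by (rule exI[of _ 0])+ (auto simp: r3_vec_def)

lemma R3_add:
  assumes "v \<in> R3" "v' \<in> R3"
  shows "(\<lambda>k u w. v k u w + v' k u w) \<in> R3"
proof -
  obtain a1 a2 j l1 l2 l3 b1 b2 i m1 m2 m3 where
    "v = r3_vec a1 a2 j l1 l2 l3" "v' = r3_vec b1 b2 i m1 m2 m3"
    using assms unfolding R3_iff by blast
  then have "(\<lambda>k u w. v k u w + v' k u w)
      = r3_vec (a1 + b1) (a2 + b2) (j + i) (l1 + m1) (l2 + m2) (l3 + m3)"
    by (auto simp: r3_vec_def algebra_simps)
  then show ?thesis unfolding R3_iff by blast
qed

lemma R3_scale:
  assumes "v \<in> R3"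
  shows "(\<lambda>k u w. a * v k u w) \<in> R3"
proof -
  obtain a1 a2 j l1 l2 l3 where "v = r3_vec a1 a2 j l1 l2 l3"
    using assms unfolding R3_iff by blast
  then have "(\<lambda>k u w. a * v k u w) = r3_vec (a * a1) (a * a2) (a * j) (a * l1) (a * l2) (a * l3)"
    by (auto simp: r3_vec_def algebra_simps)
  then show ?thesis unfolding R3_iff by blast
qed

lemma R3_sum_list:
  "(\<And>y. y \<in> set ys \<Longrightarrow> (\<lambda>k u w. G y k u w) \<in> R3)
   \<Longrightarrow> (\<lambda>k u w. sum_list (map (\<lambda>y. G y k u w) ys)) \<in> R3"
  by (induction ys) (simp_all add: R3_zero R3_add)

text \<open>Twisting by the degrees of the two decorations (needed when a Koszul sign passes over
  the ternary patch) preserves R(3): it only flips the signs of the Leibniz relations.\<close>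
lemma R3_twist:
  assumes "v \<in> R3"
  shows "(\<lambda>k u w. (-1) ^ (dg u + dg w) * v k u w) \<in> R3"
proof -
  obtain a1 a2 j l1 l2 l3 where v: "v = r3_vec a1 a2 j l1 l2 l3"
    using assms unfolding R3_iff by blast
  have "(\<lambda>k u w. (-1) ^ (dg u + dg w) * v k u w) = r3_vec a1 a2 j (- l1) (- l2) (- l3)"
  proof (intro ext)
    fix k u w show "(-1) ^ (dg u + dg w) * v k u w = r3_vec a1 a2 j (- l1) (- l2) (- l3) k u w"
      by (cases u; cases w) (auto simp: v r3_vec_def e3_def)
  qed
  then show ?thesis unfolding R3_iff by blast
qed

text \<open>omega of the root and of the inner vertex of the ternary patch number k
  (k = 3: u(w(A,B),D), k = 1: u(A,w(B,D)), k = 2: u(w(A,D),B)), given the leaf counts.\<close>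
definition root_weight :: "'a::field_char_0 \<Rightarrow> 'a \<Rightarrow> 'a \<Rightarrow> nat \<Rightarrow> 'a" where
  "root_weight a b d k = (if k = 3 then (a + b) * d else if k = 1 then a * (b + d) else (a + d) * b)"

definition inner_weight :: "'a::field_char_0 \<Rightarrow> 'a \<Rightarrow> 'a \<Rightarrow> nat \<Rightarrow> 'a" where
  "inner_weight a b d k = (if k = 3 then a * b else if k = 1 then b * d else a * d)"

text \<open>The weighted map h applied at one of the two vertices of a ternary patch, read off on
  coefficient vectors: a mu-coefficient receives the beta-coefficient at the same position.\<close>
definition patch_h :: "'a::field_char_0 \<Rightarrow> 'a \<Rightarrow> 'a \<Rightarrow> (nat \<Rightarrow> dec \<Rightarrow> dec \<Rightarrow> 'a)
    \<Rightarrow> nat \<Rightarrow> dec \<Rightarrow> dec \<Rightarrow> 'a" where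
  "patch_h a b d V k u w = (if k \<in> {1,2,3} then
     (if u = Mu then - root_weight a b d k * V k Be w else 0)
     + (if w = Mu then inner_weight a b d k * (-1) ^ dg u * V k u Be else 0)
   else 0)"

text \<open>The heart of the matter: H maps the relations R(3) into R(3).  The image of the Jacobi
  relation is a combination of Leibniz relations, Leibniz relations go to associativity.\<close>
lemma patch_h_R3:
  assumes "V \<in> R3"
  shows "patch_h a b d V \<in> R3"
proof -
  obtain a1 a2 j l1 l2 l3 where V: "V = r3_vec a1 a2 j l1 l2 l3"
    using assms unfolding R3_iff by blast
  let ?W = "r3_vec (patch_h a b d V 3 Mu Mu) (- patch_h a b d V 2 Mu Mu) 0
       (inner_weight a b d 1 * j) (inner_weight a b d 2 * j) (inner_weight a b d 3 * j)"
  have "patch_h a b d V = ?W"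
  proof (intro ext)
    fix k :: nat and u w :: dec
    consider "k = 1" | "k = 2" | "k = 3" | "k \<notin> {1,2,3}" by blast
    then show "patch_h a b d V k u w = ?W k u w"
      by cases (cases u; cases w;
          simp add: patch_h_def V r3_vec_def e3_def root_weight_def inner_weight_def algebra_simps)+
  qed
  then show ?thesis unfolding R3_iff by blast
qed

definition vertex_term :: "(tree \<Rightarrow> 'a::field_char_0) \<Rightarrow> ctx \<times> dec \<times> tree \<times> tree \<Rightarrow> 'a" where
  "vertex_term \<phi> x = (case x of (C, d, l, r) \<Rightarrow> if d = Mu then
      of_nat (length (leaves l) * length (leaves r)) * (-1) ^ pre_deg C * \<phi> (plug C (Nd Be l r))
      else 0)"

definition Hsum :: "(tree \<Rightarrow> 'a::field_char_0) \<Rightarrow> tree \<Rightarrow> 'a" where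
  "Hsum \<phi> t = sum_list (map (vertex_term \<phi>) (decomps t))"

lemma sum_list_divide: "sum_list (map (\<lambda>x. f x / (c::'a::field)) xs) = sum_list (map f xs) / c"
  by (induction xs) (simp_all add: add_divide_distrib)

lemma Hop_Hsum: "Hop c t = Hsum c t / of_nat (Suc (nverts t) choose 2)"
proof -
  have "Hop c t = sum_list (map (\<lambda>x. vertex_term c x / of_nat (Suc (nverts t) choose 2)) (decomps t))"
    unfolding Hop_def vertex_term_def
    by (intro arg_cong[where f=sum_list] map_cong refl) (auto simp: algebra_simps)
  also have "\<dots> = Hsum c t / of_nat (Suc (nverts t) choose 2)"
    unfolding Hsum_def by (simp add: sum_list_divide)
  finally show ?thesis .
qed

lemma decomps_plug: "(C, d, l, r) \<in> set (decomps t) \<Longrightarrow> t = plug C (Nd d l r)"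
  by (induction t arbitrary: C) auto

lemma Hsum_cong:
  "(\<And>C l r. (C, Mu, l, r) \<in> set (decomps t) \<Longrightarrow> \<phi> (plug C (Nd Be l r)) = \<psi> (plug C (Nd Be l r)))
   \<Longrightarrow> Hsum \<phi> t = Hsum \<psi> t"
  unfolding Hsum_def vertex_term_def
  by (intro arg_cong[where f=sum_list] map_cong refl) auto

lemma Hsum_scale: "Hsum (\<lambda>t. a * \<phi> t) t = a * Hsum \<phi> t"
  unfolding Hsum_def vertex_term_def sum_list_const_mult[symmetric]
  by (intro arg_cong[where f=sum_list] map_cong refl) (auto simp: algebra_simps)

lemma Hsum_zero: "(\<And>t. \<phi> t = 0) \<Longrightarrow> Hsum \<phi> t = 0"
  using Hsum_scale[of 0 \<phi> t] Hsum_cong[of t \<phi> "\<lambda>t. 0 * \<phi> t"] by simp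

lemma tdeg_plug_Mu_Be:
  "(C, Mu, l, r) \<in> set (decomps t) \<Longrightarrow> tdeg (plug C (Nd Be l r)) = Suc (tdeg t)"
proof (induction t arbitrary: C)
  case (Nd d l' r') then show ?case by auto
qed simp

text \<open>A sign depending on the degree of the argument becomes a constant, since all trees
  read by Hsum t have degree one more than t.\<close>
lemma Hsum_sign_left: "Hsum (\<lambda>X. a * (-1) ^ (m * tdeg X) * f X) t = a * (-1) ^ (m * Suc (tdeg t)) * Hsum f t"
proof -
  have "Hsum (\<lambda>X. a * (-1) ^ (m * tdeg X) * f X) t = Hsum (\<lambda>X. (a * (-1) ^ (m * Suc (tdeg t))) * f X) t"
    by (rule Hsum_cong) (simp add: tdeg_plug_Mu_Be)
  then show ?thesis by (simp add: Hsum_scale)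
qed

lemma Hsum_sign_right: "Hsum (\<lambda>X. a * (-1) ^ (tdeg X * m) * f X) t = a * (-1) ^ (Suc (tdeg t) * m) * Hsum f t"
  using Hsum_sign_left[of a m f t] by (simp add: mult.commute)

lemma vertex_term_Hole: "vertex_term \<phi> (Hole, d, l, r)
    = (if d = Mu then of_nat (length (leaves l) * length (leaves r)) * \<phi> (Nd Be l r) else 0)"
  by (simp add: vertex_term_def)

lemma Hsum_Nd: "Hsum \<phi> (Nd d l r) =
     (if d = Mu then of_nat (length (leaves l) * length (leaves r)) * \<phi> (Nd Be l r) else 0)
   + (-1) ^ dg d * Hsum (\<lambda>t. \<phi> (Nd d t r)) l + (-1) ^ (dg d + tdeg l) * Hsum (\<lambda>t. \<phi> (Nd d l t)) r"
proof -
  have left: "map (vertex_term \<phi>) (map (\<lambda>(C, e, a, b). (CL d C r, e, a, b)) xs)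
      = map (\<lambda>x. (-1) ^ dg d * vertex_term (\<lambda>t. \<phi> (Nd d t r)) x) xs" for xs
    by (auto simp: vertex_term_def power_add)
  have right: "map (vertex_term \<phi>) (map (\<lambda>(C, e, a, b). (CR d l C, e, a, b)) xs)
      = map (\<lambda>x. (-1) ^ (dg d + tdeg l) * vertex_term (\<lambda>t. \<phi> (Nd d l t)) x) xs" for xs
    by (auto simp: vertex_term_def power_add)
  show ?thesis unfolding Hsum_def
    by (simp only: decomps.simps list.map map_append left right sum_list_append sum_list.Cons
        sum_list_const_mult) (simp add: vertex_term_Hole)
qed

text \<open>The part of Hsum (plug C s) coming from the vertices of the context C.\<close>
fun Hctx :: "(tree \<Rightarrow> 'a::field_char_0) \<Rightarrow> ctx \<Rightarrow> tree \<Rightarrow> 'a" where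
  "Hctx \<phi> Hole s = 0"
| "Hctx \<phi> (CL d C r) s =
     (if d = Mu then of_nat (length (leaves (plug C s)) * length (leaves r)) * \<phi> (Nd Be (plug C s) r) else 0)
     + (-1) ^ dg d * Hctx (\<lambda>t. \<phi> (Nd d t r)) C s
     + (-1) ^ (dg d + tdeg (plug C s)) * Hsum (\<lambda>t. \<phi> (Nd d (plug C s) t)) r"
| "Hctx \<phi> (CR d l C) s =
     (if d = Mu then of_nat (length (leaves l) * length (leaves (plug C s))) * \<phi> (Nd Be l (plug C s)) else 0)
     + (-1) ^ dg d * Hsum (\<lambda>t. \<phi> (Nd d t (plug C s))) l
     + (-1) ^ (dg d + tdeg l) * Hctx (\<lambda>t. \<phi> (Nd d l t)) C s"

lemma Hsum_plug: "Hsum \<phi> (plug C s) = Hctx \<phi> C s + (-1) ^ pre_deg C * Hsum (\<lambda>t. \<phi> (plug C t)) s"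
  by (induction C arbitrary: \<phi>) (simp_all add: Hsum_Nd power_add algebra_simps)

fun ctx_deg :: "ctx \<Rightarrow> nat" where
  "ctx_deg Hole = 0"
| "ctx_deg (CL d C r) = dg d + ctx_deg C + tdeg r"
| "ctx_deg (CR d l C) = dg d + tdeg l + ctx_deg C"

fun ctx_nverts :: "ctx \<Rightarrow> nat" where
  "ctx_nverts Hole = 0"
| "ctx_nverts (CL d C r) = Suc (ctx_nverts C + nverts r)"
| "ctx_nverts (CR d l C) = Suc (nverts l + ctx_nverts C)"

fun ctx_nleaves :: "ctx \<Rightarrow> nat" where
  "ctx_nleaves Hole = 0"
| "ctx_nleaves (CL d C r) = ctx_nleaves C + length (leaves r)"
| "ctx_nleaves (CR d l C) = length (leaves l) + ctx_nleaves C"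

lemma tdeg_plug: "tdeg (plug C s) = ctx_deg C + tdeg s"
  by (induction C) auto

lemma nverts_plug: "nverts (plug C s) = ctx_nverts C + nverts s"
  by (induction C) auto

lemma nleaves_plug: "length (leaves (plug C s)) = ctx_nleaves C + length (leaves s)"
  by (induction C) auto

lemma leaves_plug_relabel: "leaves (plug C (Nd d l r)) = leaves (plug C (Nd d' l r))"
  by (induction C) auto

text \<open>Composition of contexts, so that restrictions of restrictions are restrictions.\<close>
fun ctx_comp :: "ctx \<Rightarrow> ctx \<Rightarrow> ctx" where
  "ctx_comp Hole D = D"
| "ctx_comp (CL d C r) D = CL d (ctx_comp C D) r"
| "ctx_comp (CR d l C) D = CR d l (ctx_comp C D)"

lemma plug_ctx_comp: "plug C (plug D t) = plug (ctx_comp C D) t"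
  by (induction C) auto

section \<open>H preserves T^c(M)\<close>

definition koszul_sym :: "(tree \<Rightarrow> 'a::field_char_0) \<Rightarrow> bool" where
  "koszul_sym c \<longleftrightarrow> (\<forall>C d l r. c (plug C (Nd d r l)) = (-1) ^ (tdeg l * tdeg r) * c (plug C (Nd d l r)))"

lemma koszul_sym_plug: "koszul_sym c \<Longrightarrow> koszul_sym (\<lambda>t. c (plug C t))"
  unfolding koszul_sym_def plug_ctx_comp by blast

text \<open>H(c) is supported on trees of arity n, since h does not change the leaves.\<close>
lemma Hop_vanishes:
  assumes zero: "\<And>t. \<not> arity_tree n t \<Longrightarrow> c t = 0" and t: "\<not> arity_tree n t"
  shows "Hop c t = 0"
proof -
  have "Hsum c t = Hsum (\<lambda>_. 0) t"
  proof (rule Hsum_cong)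
    fix C l r assume "(C, Mu, l, r) \<in> set (decomps t)"
    then have "leaves (plug C (Nd Be l r)) = leaves t"
      using decomps_plug leaves_plug_relabel by metis
    then show "c (plug C (Nd Be l r)) = 0"
      using t zero unfolding arity_tree_def by simp
  qed
  also have "\<dots> = 0" by (rule Hsum_zero) simp
  finally show ?thesis by (simp add: Hop_Hsum)
qed

lemma Hsum_swap:
  assumes "koszul_sym \<psi>"
  shows "Hsum \<psi> (Nd d r l) = (-1) ^ (tdeg l * tdeg r) * Hsum \<psi> (Nd d l r)"
proof -
  have sw: "\<And>d l r. \<psi> (Nd d r l) = (-1) ^ (tdeg l * tdeg r) * \<psi> (Nd d l r)"
    using assms plug.simps(1) unfolding koszul_sym_def by metis
  have left: "Hsum (\<lambda>t. \<psi> (Nd d t l)) r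
      = (-1) ^ (tdeg l * tdeg r) * ((-1) ^ tdeg l * Hsum (\<lambda>t. \<psi> (Nd d l t)) r)"
  proof (subst Hsum_scale[symmetric], subst Hsum_scale[symmetric], rule Hsum_cong)
    fix C x y assume "(C, Mu, x, y) \<in> set (decomps r)"
    then have "tdeg (plug C (Nd Be x y)) = Suc (tdeg r)" by (rule tdeg_plug_Mu_Be)
    then show "\<psi> (Nd d (plug C (Nd Be x y)) l)
        = (-1) ^ (tdeg l * tdeg r) * ((-1) ^ tdeg l * \<psi> (Nd d l (plug C (Nd Be x y))))"
      using sw[of d "plug C (Nd Be x y)" l] by (simp add: power_add mult_ac)
  qed
  have right: "Hsum (\<lambda>t. \<psi> (Nd d r t)) l
      = (-1) ^ (tdeg l * tdeg r) * ((-1) ^ tdeg r * Hsum (\<lambda>t. \<psi> (Nd d t r)) l)"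
  proof (subst Hsum_scale[symmetric], subst Hsum_scale[symmetric], rule Hsum_cong)
    fix C x y assume "(C, Mu, x, y) \<in> set (decomps l)"
    then have "tdeg (plug C (Nd Be x y)) = Suc (tdeg l)" by (rule tdeg_plug_Mu_Be)
    then show "\<psi> (Nd d r (plug C (Nd Be x y)))
        = (-1) ^ (tdeg l * tdeg r) * ((-1) ^ tdeg r * \<psi> (Nd d (plug C (Nd Be x y)) r))"
      using sw[of d r "plug C (Nd Be x y)"] by (simp add: power_add mult_ac)
  qed
  have sq: "(-1::'a) ^ tdeg r * (-1) ^ tdeg r = 1"
    by (simp add: power_add[symmetric])
  show ?thesis
    unfolding Hsum_Nd left right sw[of Be r l]
    by (simp add: algebra_simps power_add sq)
qed

text \<open>Hctx is linear in the tree plugged into the hole, as long as its leaf count and degree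
  (which enter the weights and signs) are unchanged.\<close>
lemma Hctx_proportional:
  assumes "length (leaves s1) = length (leaves s2)" "tdeg s1 = tdeg s2"
    and "\<And>C'. \<phi> (plug C' s1) = \<kappa> * \<phi> (plug C' s2)"
  shows "Hctx \<phi> C s1 = \<kappa> * Hctx \<phi> C s2"
  using assms(3)
proof (induction C arbitrary: \<phi>)
  case Hole then show ?case by simp
next
  case (CL d C r)
  have root: "\<phi> (Nd Be (plug C s1) r) = \<kappa> * \<phi> (Nd Be (plug C s2) r)"
    using CL.prems[of "CL Be C r"] by simp
  have ctx: "Hctx (\<lambda>t. \<phi> (Nd d t r)) C s1 = \<kappa> * Hctx (\<lambda>t. \<phi> (Nd d t r)) C s2"
    by (rule CL.IH) (use CL.prems[of "CL d _ r"] in simp)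
  have sub: "Hsum (\<lambda>t. \<phi> (Nd d (plug C s1) t)) r = \<kappa> * Hsum (\<lambda>t. \<phi> (Nd d (plug C s2) t)) r"
    by (subst Hsum_scale[symmetric], rule Hsum_cong) (use CL.prems[of "CL d C _"] in simp)
  show ?case
    by (simp add: root ctx sub assms(1,2) nleaves_plug tdeg_plug algebra_simps)
next
  case (CR d l C)
  have root: "\<phi> (Nd Be l (plug C s1)) = \<kappa> * \<phi> (Nd Be l (plug C s2))"
    using CR.prems[of "CR Be l C"] by simp
  have ctx: "Hctx (\<lambda>t. \<phi> (Nd d l t)) C s1 = \<kappa> * Hctx (\<lambda>t. \<phi> (Nd d l t)) C s2"
    by (rule CR.IH) (use CR.prems[of "CR d l _"] in simp)
  have sub: "Hsum (\<lambda>t. \<phi> (Nd d t (plug C s1))) l = \<kappa> * Hsum (\<lambda>t. \<phi> (Nd d t (plug C s2))) l"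
    by (subst Hsum_scale[symmetric], rule Hsum_cong) (use CR.prems[of "CR d _ C"] in simp)
  show ?case
    by (simp add: root ctx sub assms(1,2) nleaves_plug algebra_simps)
qed

text \<open>H(c) satisfies the Koszul sign rule: split Hsum at the swapped vertex by Hsum_plug.\<close>
lemma Hop_swap:
  assumes "koszul_sym c"
  shows "Hop c (plug C (Nd d r l)) = (-1) ^ (tdeg l * tdeg r) * Hop c (plug C (Nd d l r))"
proof -
  have swap: "\<And>C'. c (plug C' (Nd d r l)) = (-1) ^ (tdeg l * tdeg r) * c (plug C' (Nd d l r))"
    using assms unfolding koszul_sym_def by blast
  have ctx: "Hctx c C (Nd d r l) = (-1) ^ (tdeg l * tdeg r) * Hctx c C (Nd d l r)"
    by (rule Hctx_proportional) (simp, simp, rule swap)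
  have sub: "Hsum (\<lambda>t. c (plug C t)) (Nd d r l) = (-1) ^ (tdeg l * tdeg r) * Hsum (\<lambda>t. c (plug C t)) (Nd d l r)"
    by (rule Hsum_swap, rule koszul_sym_plug[OF assms])
  have nverts_eq: "nverts (plug C (Nd d r l)) = nverts (plug C (Nd d l r))"
    by (simp add: nverts_plug)
  have factor: "\<And>k x p y z. (k * x + p * (k * y)) / z = k * ((x + p * y) / (z::'a))"
    by (simp add: distrib_left mult.left_commute add_divide_distrib)
  show ?thesis
    unfolding Hop_Hsum Hsum_plug ctx sub nverts_eq by (rule factor)
qed

section \<open>H preserves the kernel of d_2\<close>

definition d2_closed :: "(tree \<Rightarrow> 'a::field_char_0) \<Rightarrow> bool" where
  "d2_closed \<phi> \<longleftrightarrow> (\<forall>C A B D. d2_local \<phi> C A B D \<in> R3)"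

lemma d2_local_plug: "d2_local f C A B D = d2_local (\<lambda>s. f (plug C s)) Hole A B D"
  by (intro ext) (simp add: d2_local_def)

lemma d2_closed_at_root: "d2_closed \<phi> \<Longrightarrow> d2_local (\<lambda>s. \<phi> (plug C s)) Hole A B D \<in> R3"
  unfolding d2_closed_def d2_local_plug[symmetric] by blast

lemma d2_closed_plug:
  assumes "d2_closed \<phi>"
  shows "d2_closed (\<lambda>t. \<phi> (plug C t))"
proof -
  have "d2_local (\<lambda>t. \<phi> (plug C t)) C' A B D = d2_local \<phi> (ctx_comp C C') A B D" for C' A B D
    by (intro ext) (simp add: d2_local_def plug_ctx_comp)
  then show ?thesis using assms unfolding d2_closed_def by simp
qed

lemma d2_root_add:
  assumes "d2_local f Hole A B D \<in> R3" "d2_local g Hole A B D \<in> R3"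
  shows "d2_local (\<lambda>s. f s + g s) Hole A B D \<in> R3"
proof -
  have "d2_local (\<lambda>s. f s + g s) Hole A B D
      = (\<lambda>k u w. d2_local f Hole A B D k u w + d2_local g Hole A B D k u w)"
    by (intro ext) (simp add: d2_local_def distrib_left)
  then show ?thesis using R3_add[OF assms] by simp
qed

lemma d2_root_scale:
  assumes "d2_local f Hole A B D \<in> R3"
  shows "d2_local (\<lambda>s. a * f s) Hole A B D \<in> R3"
proof -
  have "d2_local (\<lambda>s. a * f s) Hole A B D = (\<lambda>k u w. a * d2_local f Hole A B D k u w)"
    by (intro ext) (simp add: d2_local_def mult.left_commute)
  then show ?thesis using R3_scale[OF assms] by simp
qed

lemma d2_root_leaf_weight:
  assumes "d2_local f Hole A B D \<in> R3"
  shows "d2_local (\<lambda>s. g (length (leaves s)) * f s) Hole A B D \<in> R3"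
proof -
  have "d2_local (\<lambda>s. g (length (leaves s)) * f s) Hole A B D
     = (\<lambda>k u w. g (length (leaves A) + length (leaves B) + length (leaves D)) * d2_local f Hole A B D k u w)"
    by (intro ext) (simp add: d2_local_def mult.left_commute add_ac)
  then show ?thesis using R3_scale[OF assms] by simp
qed

lemma d2_root_degree_sign:
  assumes "d2_local f Hole A B D \<in> R3"
  shows "d2_local (\<lambda>s. (-1) ^ tdeg s * f s) Hole A B D \<in> R3"
proof -
  have "d2_local (\<lambda>s. (-1) ^ tdeg s * f s) Hole A B D
     = (\<lambda>k u w. (-1) ^ (tdeg A + tdeg B + tdeg D) * ((-1) ^ (dg u + dg w) * d2_local f Hole A B D k u w))"
    by (intro ext) (simp add: d2_local_def power_add mult.left_commute mult.commute)
  then show ?thesis using R3_scale[OF R3_twist[OF assms]] by simp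
qed

lemma Hsum_R3:
  assumes "\<And>C l r. (C, Mu, l, r) \<in> set (decomps t) \<Longrightarrow> (\<lambda>k u w. F k u w (plug C (Nd Be l r))) \<in> R3"
  shows "(\<lambda>k u w. Hsum (F k u w) t) \<in> R3"
  unfolding Hsum_def
proof (rule R3_sum_list)
  fix y assume y: "y \<in> set (decomps t)"
  obtain C d l r where y_eq: "y = (C, d, l, r)" by (cases y) auto
  show "(\<lambda>k u w. vertex_term (F k u w) y) \<in> R3"
  proof (cases "d = Mu")
    case True
    have "(\<lambda>k u w. vertex_term (F k u w) y) = (\<lambda>k u w.
        (of_nat (length (leaves l) * length (leaves r)) * (-1) ^ pre_deg C) * F k u w (plug C (Nd Be l r)))"
      by (simp add: y_eq True vertex_term_def mult.assoc)
    then show ?thesis using R3_scale[OF assms] y y_eq True by simp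
  next
    case False
    then show ?thesis using R3_zero y_eq by (simp add: vertex_term_def)
  qed
qed

lemma d2_root_Hsum:
  assumes "\<And>t. d2_local (\<lambda>s. G s t) Hole A B D \<in> R3"
  shows "d2_local (\<lambda>s. Hsum (G s) r) Hole A B D \<in> R3"
proof -
  have "(\<lambda>k u w. Hsum (\<lambda>t. d2_local (\<lambda>s. G s t) Hole A B D k u w) r) \<in> R3"
    by (rule Hsum_R3) (use assms in simp)
  moreover have "d2_local (\<lambda>s. Hsum (G s) r) Hole A B D
      = (\<lambda>k u w. Hsum (\<lambda>t. d2_local (\<lambda>s. G s t) Hole A B D k u w) r)"
    by (intro ext) (simp add: d2_local_def Hsum_scale Hsum_zero)
  ultimately show ?thesis by simp
qed

text \<open>The vertices of the context C (outside the patch) contribute a vector in R(3): each of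
  them is a root patch of a restriction of the d_2-closed function, up to weight and sign.\<close>
lemma Hctx_d2_R3: "d2_closed \<phi> \<Longrightarrow> d2_local (\<lambda>s. Hctx \<phi> C s) Hole A B D \<in> R3"
proof (induction C arbitrary: \<phi>)
  case Hole
  have "d2_local (\<lambda>s. Hctx \<phi> Hole s) Hole A B D = (\<lambda>k u w. 0)"
    by (intro ext) (simp add: d2_local_def)
  then show ?case using R3_zero by simp
next
  case (CL d C r)
  have eq: "(\<lambda>s. Hctx \<phi> (CL d C r) s) = (\<lambda>s.
       (if d = Mu then of_nat ((ctx_nleaves C + length (leaves s)) * length (leaves r)) else 0)
         * \<phi> (plug (CL Be C r) s)
     + ((-1) ^ dg d * Hctx (\<lambda>t. \<phi> (Nd d t r)) C s
     + (-1) ^ (dg d + ctx_deg C) * ((-1) ^ tdeg s * Hsum (\<lambda>t. \<phi> (plug (CL d C t) s)) r)))"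
    by (intro ext) (simp add: nleaves_plug tdeg_plug power_add mult.assoc)
  have root: "d2_local (\<lambda>s. (if d = Mu then of_nat ((ctx_nleaves C + length (leaves s)) * length (leaves r)) else 0)
      * \<phi> (plug (CL Be C r) s)) Hole A B D \<in> R3"
    using d2_root_leaf_weight[where g = "\<lambda>n. if d = Mu then of_nat ((ctx_nleaves C + n) * length (leaves r)) else 0",
        OF d2_closed_at_root[OF CL.prems, of "CL Be C r"]]
    by simp
  have closed: "d2_closed (\<lambda>t. \<phi> (Nd d t r))"
    using d2_closed_plug[OF CL.prems, of "CL d Hole r"] by simp
  have ctx: "d2_local (\<lambda>s. (-1) ^ dg d * Hctx (\<lambda>t. \<phi> (Nd d t r)) C s) Hole A B D \<in> R3"
    by (rule d2_root_scale, rule CL.IH[OF closed])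
  have sub: "d2_local (\<lambda>s. (-1) ^ (dg d + ctx_deg C) * ((-1) ^ tdeg s * Hsum (\<lambda>t. \<phi> (plug (CL d C t) s)) r))
      Hole A B D \<in> R3"
    by (rule d2_root_scale, rule d2_root_degree_sign, rule d2_root_Hsum, rule d2_closed_at_root[OF CL.prems])
  show ?case unfolding eq by (rule d2_root_add[OF root d2_root_add[OF ctx sub]])
next
  case (CR d l C)
  have eq: "(\<lambda>s. Hctx \<phi> (CR d l C) s) = (\<lambda>s.
       (if d = Mu then of_nat (length (leaves l) * (ctx_nleaves C + length (leaves s))) else 0)
         * \<phi> (plug (CR Be l C) s)
     + ((-1) ^ dg d * Hsum (\<lambda>t. \<phi> (plug (CR d t C) s)) l
     + (-1) ^ (dg d + tdeg l) * Hctx (\<lambda>t. \<phi> (Nd d l t)) C s))"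
    by (intro ext) (simp add: nleaves_plug tdeg_plug power_add mult.assoc)
  have root: "d2_local (\<lambda>s. (if d = Mu then of_nat (length (leaves l) * (ctx_nleaves C + length (leaves s))) else 0)
      * \<phi> (plug (CR Be l C) s)) Hole A B D \<in> R3"
    using d2_root_leaf_weight[where g = "\<lambda>n. if d = Mu then of_nat (length (leaves l) * (ctx_nleaves C + n)) else 0",
        OF d2_closed_at_root[OF CR.prems, of "CR Be l C"]]
    by simp
  have closed: "d2_closed (\<lambda>t. \<phi> (Nd d l t))"
    using d2_closed_plug[OF CR.prems, of "CR d l Hole"] by simp
  have sub: "d2_local (\<lambda>s. (-1) ^ dg d * Hsum (\<lambda>t. \<phi> (plug (CR d t C) s)) l) Hole A B D \<in> R3"
    by (rule d2_root_scale, rule d2_root_Hsum, rule d2_closed_at_root[OF CR.prems])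
  have ctx: "d2_local (\<lambda>s. (-1) ^ (dg d + tdeg l) * Hctx (\<lambda>t. \<phi> (Nd d l t)) C s) Hole A B D \<in> R3"
    by (rule d2_root_scale, rule CR.IH[OF closed])
  show ?case unfolding eq by (rule d2_root_add[OF root d2_root_add[OF sub ctx]])
qed

lemma d2_Hsum_patch:
  fixes \<psi> :: "tree \<Rightarrow> 'a::field_char_0"
  shows "d2_local (Hsum \<psi>) Hole A B D = (\<lambda>k u w.
      patch_h (of_nat (length (leaves A))) (of_nat (length (leaves B))) (of_nat (length (leaves D)))
        (d2_local \<psi> Hole A B D) k u w
    + (-1) ^ (dg u + dg w) * Hsum (\<lambda>X. d2_local \<psi> Hole X B D k u w) A
    + (-1) ^ (dg u + dg w + tdeg A) * Hsum (\<lambda>X. d2_local \<psi> Hole A X D k u w) B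
    + (-1) ^ (dg u + dg w + tdeg A + tdeg B) * Hsum (\<lambda>X. d2_local \<psi> Hole A B X k u w) D)"
    (is "_ = ?rhs")
proof (intro ext)
  fix k :: nat and u w :: dec
  consider "k = 1" | "k = 2" | "k = 3" | "k \<notin> {1,2,3}" by blast
  then show "d2_local (Hsum \<psi>) Hole A B D k u w = ?rhs k u w"
    by cases ((simp only: d2_local_def,
          simp add: Hsum_sign_left Hsum_sign_right Hsum_scale Hsum_zero),
       (cases u; cases w; cases "even (tdeg A)"; cases "even (tdeg B)"; cases "even (tdeg D)");
       simp add: Hsum_Nd patch_h_def root_weight_def inner_weight_def susp_sign_def
         minus_one_power_iff algebra_simps)+
qed

lemma d2_Hsum_patch_R3:
  assumes "d2_closed \<psi>"
  shows "d2_local (Hsum \<psi>) Hole A B D \<in> R3"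
proof -
  have closed: "\<And>X Y Z. d2_local \<psi> Hole X Y Z \<in> R3"
    using assms unfolding d2_closed_def by blast
  have patch: "patch_h (of_nat (length (leaves A))) (of_nat (length (leaves B))) (of_nat (length (leaves D)))
      (d2_local \<psi> Hole A B D) \<in> R3"
    by (rule patch_h_R3[OF closed])
  have in_A: "(\<lambda>k u w. (-1) ^ (dg u + dg w) * Hsum (\<lambda>X. d2_local \<psi> Hole X B D k u w) A) \<in> R3"
    by (rule R3_twist, rule Hsum_R3) (simp add: closed)
  have "(\<lambda>k u w. (-1) ^ tdeg A * ((-1) ^ (dg u + dg w) * Hsum (\<lambda>X. d2_local \<psi> Hole A X D k u w) B)) \<in> R3"
    by (rule R3_scale, rule R3_twist, rule Hsum_R3) (simp add: closed)
  then have in_B: "(\<lambda>k u w. (-1) ^ (dg u + dg w + tdeg A) * Hsum (\<lambda>X. d2_local \<psi> Hole A X D k u w) B) \<in> R3"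
    by (simp add: power_add mult_ac)
  have "(\<lambda>k u w. (-1) ^ (tdeg A + tdeg B) * ((-1) ^ (dg u + dg w) * Hsum (\<lambda>X. d2_local \<psi> Hole A B X k u w) D)) \<in> R3"
    by (rule R3_scale, rule R3_twist, rule Hsum_R3) (simp add: closed)
  then have in_D: "(\<lambda>k u w. (-1) ^ (dg u + dg w + tdeg A + tdeg B) * Hsum (\<lambda>X. d2_local \<psi> Hole A B X k u w) D) \<in> R3"
    by (simp add: power_add mult_ac)
  show ?thesis unfolding d2_Hsum_patch
    by (rule R3_add[OF R3_add[OF R3_add[OF patch in_A] in_B] in_D])
qed

text \<open>H preserves d_2-closedness: normalise, then split the patch component by Hsum_plug.\<close>
lemma Hop_d2_closed:
  assumes "d2_closed c"
  shows "d2_closed (Hop c)"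
  unfolding d2_closed_def
proof (intro allI)
  fix C A B D
  define Z :: 'a where "Z = of_nat (Suc (ctx_nverts C + Suc (Suc (nverts A + nverts B + nverts D))) choose 2)"
  have normalise: "d2_local (Hop c) C A B D = (\<lambda>k u w. inverse Z * d2_local (Hsum c) C A B D k u w)"
    by (intro ext) (simp add: d2_local_def Hop_Hsum nverts_plug Z_def divide_inverse mult.left_commute
        mult.commute add_ac)
  have split: "d2_local (Hsum c) C A B D
      = d2_local (\<lambda>s. Hctx c C s + (-1) ^ pre_deg C * Hsum (\<lambda>t. c (plug C t)) s) Hole A B D"
    by (subst d2_local_plug) (simp add: Hsum_plug)
  have "d2_local (Hsum c) C A B D \<in> R3"
    unfolding split
    by (rule d2_root_add[OF Hctx_d2_R3[OF assms]
          d2_root_scale[OF d2_Hsum_patch_R3[OF d2_closed_plug[OF assms]]]])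
  then show "d2_local (Hop c) C A B D \<in> R3"
    unfolding normalise by (rule R3_scale)
qed

theorem lemma2p5:
  fixes c :: "tree \<Rightarrow> 'a::field_char_0" and n :: nat
  assumes "c \<in> Gdual n"
  shows "Hop c \<in> Gdual n"
proof -
  have c: "c \<in> TcM n" and closed: "d2_closed c"
    using assms unfolding Gdual_def d2_closed_def by blast+
  have zero: "\<And>t. \<not> arity_tree n t \<Longrightarrow> c t = 0" and sym: "koszul_sym c"
    using c unfolding TcM_def koszul_sym_def by blast+
  have "Hop c \<in> TcM n"
    unfolding TcM_def using Hop_vanishes[of n c, OF zero] Hop_swap[OF sym] by blast
  with Hop_d2_closed[OF closed] show ?thesis
    unfolding Gdual_def d2_closed_def by blast
qed

end
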